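(* The edge-coloring of a complete $k$-edge-colored permutation graph is a Gallai coloring with $k$ colors, i.e., it contains no rainbow triangle.
   Context: A complete $k$-edge-colored graph $G=(V,E_1,\dots,E_k)$ is the complete graph on a finite set $V$ with edges partitioned into $k$ nonempty color classes $E_i$; $G_{|i}=(V,E_i)$. A labeling is a bijection $\ell:V\to\{1,\dots,|V|\}$. A graph $(V,E)$ with labeling $\ell$ is a simple permutation graph of a permutation $\pi$ if for all $u,v$ with $\ell(u)>\ell(v)$: $\{u,v\}\in E$ iff $\pi^{-1}(\ell(u))<\pi^{-1}(\ell(v))$. $G$ is a complete $k$-edge-colored permutation graph if there exist a labeling $\ell$ and permutations $\pi_1,\dots,\pi_k$ with $(G_{|i},\ell)$ a simple permutation graph of $\pi_i$ for all $i$. A rainbow triangle is a set of three vertices whose three edges have pairwise distinct colors; a Gallai coloring of a complete graph with $k$ colors is an edge-coloring with $k$ colors containing no rainbow triangle. *)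

theory Defs
  imports "HOL-Combinatorics.Permutations"
begin

definition all_edges :: "'a set \<Rightarrow> 'a set set" where
  "all_edges V = {{u, v} | u v. u \<in> V \<and> v \<in> V \<and> u \<noteq> v}"

definition complete_k_edge_colored :: "'a set \<Rightarrow> nat \<Rightarrow> (nat \<Rightarrow> 'a set set) \<Rightarrow> bool" where
  "complete_k_edge_colored V k E \<longleftrightarrow>
     finite V \<and>
     (\<forall>i\<in>{1..k}. E i \<noteq> {} \<and> E i \<subseteq> all_edges V) \<and>
     (\<forall>i\<in>{1..k}. \<forall>j\<in>{1..k}. i \<noteq> j \<longrightarrow> E i \<inter> E j = {}) \<and>
     (\<Union>i\<in>{1..k}. E i) = all_edges V"

definition labeling :: "'a set \<Rightarrow> ('a \<Rightarrow> nat) \<Rightarrow> bool" where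
  "labeling V l \<longleftrightarrow> bij_betw l V {1..card V}"

definition simple_permutation_graph ::
  "'a set \<Rightarrow> 'a set set \<Rightarrow> ('a \<Rightarrow> nat) \<Rightarrow> (nat \<Rightarrow> nat) \<Rightarrow> bool" where
  "simple_permutation_graph V Ed l \<pi> \<longleftrightarrow>
     \<pi> permutes {1..card V} \<and>
     (\<forall>u\<in>V. \<forall>v\<in>V. l u > l v \<longrightarrow>
        ({u, v} \<in> Ed \<longleftrightarrow> inv \<pi> (l u) < inv \<pi> (l v)))"

definition complete_k_edge_colored_permutation_graph ::
  "'a set \<Rightarrow> nat \<Rightarrow> (nat \<Rightarrow> 'a set set) \<Rightarrow> bool" where
  "complete_k_edge_colored_permutation_graph V k E \<longleftrightarrow>
     complete_k_edge_colored V k E \<and>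
     (\<exists>l \<pi>. labeling V l \<and>
        (\<forall>i\<in>{1..k}. simple_permutation_graph V (E i) l (\<pi> i)))"

definition rainbow_triangle :: "'a set \<Rightarrow> nat \<Rightarrow> (nat \<Rightarrow> 'a set set) \<Rightarrow> 'a \<Rightarrow> 'a \<Rightarrow> 'a \<Rightarrow> bool" where
  "rainbow_triangle V k E x y z \<longleftrightarrow>
     x \<in> V \<and> y \<in> V \<and> z \<in> V \<and> x \<noteq> y \<and> y \<noteq> z \<and> x \<noteq> z \<and>
     (\<exists>i\<in>{1..k}. \<exists>j\<in>{1..k}. \<exists>m\<in>{1..k}. i \<noteq> j \<and> j \<noteq> m \<and> i \<noteq> m \<and>
        {x, y} \<in> E i \<and> {y, z} \<in> E j \<and> {x, z} \<in> E m)"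

definition gallai_coloring :: "'a set \<Rightarrow> nat \<Rightarrow> (nat \<Rightarrow> 'a set set) \<Rightarrow> bool" where
  "gallai_coloring V k E \<longleftrightarrow>
     complete_k_edge_colored V k E \<and> (\<nexists>x y z. rainbow_triangle V k E x y z)"

end

theory Submission
  imports Defs
begin

text \<open>The edges of a simple permutation graph are the pairs inverted by \<pi> with respect to the
  labeling. Non-inversions are transitive, so if the labels satisfy a < b < c and {a, c} is
  an inversion, then so is {a, b} or {b, c}. In a complete edge-colored permutation graph
  every color class is such a graph, hence in any triangle the edge joining the vertices
  with the smallest and the largest label has the color of one of the other two edges.\<close>

lemma simple_permutation_graph_long_edge_ordered:
  assumes sp: "simple_permutation_graph V Ed l \<pi>"
    and V: "a \<in> V" "b \<in> V" "c \<in> V"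
    and order: "l a < l b" "l b < l c"
    and edge: "{a, c} \<in> Ed"
  shows "{a, b} \<in> Ed \<or> {b, c} \<in> Ed"
proof -
  have inversion: "{u, v} \<in> Ed \<longleftrightarrow> inv \<pi> (l v) < inv \<pi> (l u)"
    if "u \<in> V" "v \<in> V" "l u < l v" for u v
    using sp that insert_commute[of u v "{}"] unfolding simple_permutation_graph_def by metis
  show ?thesis
    using inversion[of a b] inversion[of b c] inversion[of a c] V order edge by linarith
qed

lemma simple_permutation_graph_long_edge:
  assumes sp: "simple_permutation_graph V Ed l \<pi>"
    and V: "a \<in> V" "b \<in> V" "c \<in> V"
    and between: "l a < l b \<and> l b < l c \<or> l c < l b \<and> l b < l a"
    and edge: "{a, c} \<in> Ed"
  shows "{a, b} \<in> Ed \<or> {b, c} \<in> Ed"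
  using between
proof
  assume "l c < l b \<and> l b < l a"
  moreover have "{c, a} \<in> Ed" using edge by (simp add: insert_commute)
  ultimately have "{c, b} \<in> Ed \<or> {b, a} \<in> Ed"
    using simple_permutation_graph_long_edge_ordered[OF sp] V by blast
  then show ?thesis by (auto simp: insert_commute)
qed (use simple_permutation_graph_long_edge_ordered[OF sp V] edge in blast)

lemma permutation_coloring_long_edge_color:
  assumes disjoint: "\<forall>i\<in>{1..k}. \<forall>j\<in>{1..k}. i \<noteq> j \<longrightarrow> E i \<inter> E j = {}"
    and sp: "\<forall>i\<in>{1..k}. simple_permutation_graph V (E i) l (\<pi> i)"
    and V: "a \<in> V" "b \<in> V" "c \<in> V"
    and between: "l a < l b \<and> l b < l c \<or> l c < l b \<and> l b < l a"
    and colors: "p \<in> {1..k}" "q \<in> {1..k}" "r \<in> {1..k}"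
    and edges: "{a, b} \<in> E p" "{b, c} \<in> E q" "{a, c} \<in> E r"
  shows "r = p \<or> r = q"
proof -
  have "{a, b} \<in> E r \<or> {b, c} \<in> E r"
    using simple_permutation_graph_long_edge[OF sp[rule_format, OF colors(3)] V between]
      edges(3) .
  then show ?thesis using disjoint colors edges by blast
qed

lemma permutation_coloring_no_rainbow_triangle:
  assumes disjoint: "\<forall>i\<in>{1..k}. \<forall>j\<in>{1..k}. i \<noteq> j \<longrightarrow> E i \<inter> E j = {}"
    and sp: "\<forall>i\<in>{1..k}. simple_permutation_graph V (E i) l (\<pi> i)"
    and inj: "inj_on l V"
  shows "\<not> rainbow_triangle V k E x y z"
proof
  note long_edge = permutation_coloring_long_edge_color[OF disjoint sp]
  assume "rainbow_triangle V k E x y z"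
  then obtain i j m where V: "x \<in> V" "y \<in> V" "z \<in> V" and "x \<noteq> y" "y \<noteq> z" "x \<noteq> z"
    and colors: "i \<in> {1..k}" "j \<in> {1..k}" "m \<in> {1..k}" "i \<noteq> j" "j \<noteq> m" "i \<noteq> m"
    and edges: "{x, y} \<in> E i" "{y, z} \<in> E j" "{x, z} \<in> E m"
    unfolding rainbow_triangle_def by blast
  then have "l x \<noteq> l y" "l y \<noteq> l z" "l x \<noteq> l z"
    using inj by (auto dest: inj_onD)
  then consider (y_middle) "l x < l y \<and> l y < l z \<or> l z < l y \<and> l y < l x"
    | (x_middle) "l y < l x \<and> l x < l z \<or> l z < l x \<and> l x < l y"
    | (z_middle) "l x < l z \<and> l z < l y \<or> l y < l z \<and> l z < l x"
    by linarith
  then show False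
  proof cases
    case y_middle then show ?thesis using long_edge[of x y z i j m] V colors edges by blast
  next
    case x_middle then show ?thesis
      using long_edge[of y x z i m j] V colors edges by (auto simp: insert_commute)
  next
    case z_middle then show ?thesis
      using long_edge[of x z y m j i] V colors edges by (auto simp: insert_commute)
  qed
qed

theorem corollary6p1:
  fixes V :: "'a set" and k :: nat and E :: "nat \<Rightarrow> 'a set set"
  assumes "complete_k_edge_colored_permutation_graph V k E"
  shows "gallai_coloring V k E"
proof -
  obtain l \<pi> where colored: "complete_k_edge_colored V k E" and "labeling V l"
    and sp: "\<forall>i\<in>{1..k}. simple_permutation_graph V (E i) l (\<pi> i)"
    using assms unfolding complete_k_edge_colored_permutation_graph_def by blast
  then have inj: "inj_on l V" by (simp add: labeling_def bij_betw_def)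
  have disjoint: "\<forall>i\<in>{1..k}. \<forall>j\<in>{1..k}. i \<noteq> j \<longrightarrow> E i \<inter> E j = {}"
    using colored unfolding complete_k_edge_colored_def by blast
  note no_rainbow = permutation_coloring_no_rainbow_triangle[OF disjoint sp inj]
  show ?thesis using colored no_rainbow unfolding gallai_coloring_def by blast
qed

end
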